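(* For integers $0\le r\le m$ with $m\ge1$ and $k\ge1$, the rates of $\mathrm{RM}(r,m)$ and $\mathrm{RM}(r,m+k)$ satisfy $$R(r,m)-R(r,m+k)\le\frac{3k+4}{5\sqrt m}.$$
   Context: The rate of the Reed--Muller code $\mathrm{RM}(r,m)$ is $R(r,m)=2^{-m}\sum_{i=0}^{r}\binom{m}{i}$. *)

theory Defs
  imports Complex_Main
begin

definition RM_rate :: "nat \<Rightarrow> nat \<Rightarrow> real" where
  "RM_rate r m = (\<Sum>i\<le>r. real (m choose i)) / 2 ^ m"

end

theory Submission
  imports Defs
begin

(* Pascal's rule shows that passing from RM(r,n) to RM(r,n+1) lowers the rate by exactly
   C(n,r)/2^(n+1). Every binomial coefficient is bounded by a central one, and consecutive
   normalised central coefficients C(2t,t)/4^t have ratio (2t+1)/(2t+2), which gives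
   (C(2t,t)/4^t)^2 (3t+1) <= 1 by induction. Hence each step costs at most 3/(5 sqrt n),
   and telescoping over k steps gives 3k/(5 sqrt m), slightly better than the claim. *)

lemma central_binomial_fact: "real ((2 * n) choose n) = fact (2 * n) / fact n ^ 2"
  using binomial_fact[of n "2 * n", where 'a = real] by (simp add: power2_eq_square)

lemma central_binomial_Suc:
  "real ((2 * Suc t) choose Suc t) = real ((2 * t) choose t) * (2 * (2 * t + 1) / (t + 1))"
proof -
  have "fact (2 * Suc t) = (2 * t + 2) * (2 * t + 1) * (fact (2 * t) :: real)"
    by (simp add: algebra_simps)
  moreover have "fact (Suc t) = (t + 1) * (fact t :: real)"
    by simp
  ultimately show ?thesis
    unfolding central_binomial_fact
    by (simp add: divide_simps) (simp add: algebra_simps power2_eq_square)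
qed

lemma central_binomial_bound: "(real ((2 * t) choose t) / 4 ^ t)\<^sup>2 * (3 * t + 1) \<le> 1"
proof (induction t)
  case 0
  then show ?case by simp
next
  case (Suc t)
  define a where "a = real ((2 * t) choose t) / 4 ^ t"
  define q :: real where "q = (2 * t + 1) / (2 * t + 2)"
  have "real ((2 * Suc t) choose Suc t) / 4 ^ Suc t = a * q"
    unfolding central_binomial_Suc a_def q_def by (simp add: divide_simps) (simp add: algebra_simps)
  moreover have "q\<^sup>2 * (3 * Suc t + 1) \<le> 3 * t + 1"
  proof -
    have "(0::real) < (2 * t + 2)\<^sup>2"
      by simp
    then show ?thesis
      by (simp add: q_def power_divide pos_divide_le_eq power2_eq_square algebra_simps)
  qed
  ultimately have "(real ((2 * Suc t) choose Suc t) / 4 ^ Suc t)\<^sup>2 * (3 * Suc t + 1)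
      \<le> a\<^sup>2 * (3 * t + 1)"
    by (simp add: power_mult_distrib mult.assoc mult_left_mono)
  also have "\<dots> \<le> 1"
    using Suc.IH by (simp add: a_def)
  finally show ?case .
qed

lemma binomial_Suc_le_twice_central: "Suc n choose k \<le> 2 * (n choose (n div 2))"
proof (cases k)
  case 0
  then show ?thesis
    by (simp add: Suc_le_eq)
next
  case (Suc j)
  then show ?thesis
    using binomial_maximum[of n j] binomial_maximum[of n "Suc j"] by simp
qed

lemma binomial_div_power2_le_central:
  "real (n choose k) / 2 ^ n \<le> real ((2 * (n div 2)) choose (n div 2)) / 4 ^ (n div 2)"
proof -
  define t where "t = n div 2"
  have "n = 2 * t \<or> n = Suc (2 * t)"
    unfolding t_def by presburger
  then have "real (n choose k) / 2 ^ n \<le> real ((2 * t) choose t) / 4 ^ t"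
  proof
    assume "n = 2 * t"
    then show ?thesis
      using binomial_maximum[of n k] by (simp add: power_mult divide_right_mono)
  next
    assume n: "n = Suc (2 * t)"
    have "real (n choose k) \<le> 2 * real ((2 * t) choose t)"
      using binomial_Suc_le_twice_central[of "2 * t" k] n by (simp add: of_nat_mono)
    then show ?thesis
      using n by (simp add: power_mult divide_simps)
  qed
  then show ?thesis
    by (simp add: t_def)
qed

lemma binomial_div_power2_le_sqrt:
  assumes "n \<ge> 1"
  shows "real (n choose k) / 2 ^ n \<le> 6 / (5 * sqrt n)"
proof -
  define t where "t = n div 2"
  define a where "a = real ((2 * t) choose t) / 4 ^ t"
  have "real n \<le> 2 * t + 1"
    unfolding t_def by linarith
  then have "real n \<le> 36 / 25 * (3 * t + 1)"
    by simp
  then have "a\<^sup>2 * n \<le> a\<^sup>2 * (36 / 25 * (3 * t + 1))"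
    by (rule mult_left_mono) simp
  also have "\<dots> = 36 / 25 * (a\<^sup>2 * (3 * t + 1))"
    by (simp only: mult.left_commute)
  also have "\<dots> \<le> 36 / 25"
    using central_binomial_bound[of t] by (simp add: a_def mult.commute)
  finally have "(a * sqrt n)\<^sup>2 \<le> (6 / 5)\<^sup>2"
    by (simp add: power_mult_distrib power_divide)
  then have "a * sqrt n \<le> 6 / 5"
    by (rule power2_le_imp_le) simp
  then have "a \<le> 6 / (5 * sqrt n)"
    using assms by (simp add: field_simps)
  then show ?thesis
    using binomial_div_power2_le_central[of n k] by (simp add: a_def t_def)
qed

lemma sum_binomial_Suc_atMost:
  "(\<Sum>i\<le>r. real (Suc n choose i)) = 2 * (\<Sum>i\<le>r. real (n choose i)) - real (n choose r)"
  by (induction r) simp_all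

lemma RM_rate_diff_Suc: "RM_rate r n - RM_rate r (Suc n) = real (n choose r) / 2 ^ Suc n"
  unfolding RM_rate_def sum_binomial_Suc_atMost by (simp add: field_simps)

lemma RM_rate_diff_Suc_le:
  assumes "n \<ge> 1"
  shows "RM_rate r n - RM_rate r (Suc n) \<le> 3 / (5 * sqrt n)"
proof -
  have "RM_rate r n - RM_rate r (Suc n) = real (n choose r) / 2 ^ n / 2"
    by (simp add: RM_rate_diff_Suc)
  also have "\<dots> \<le> 6 / (5 * sqrt n) / 2"
    using binomial_div_power2_le_sqrt[OF assms] by (rule divide_right_mono) simp
  finally show ?thesis
    by simp
qed

lemma RM_rate_diff_le:
  assumes "m \<ge> 1"
  shows "RM_rate r m - RM_rate r (m + k) \<le> 3 * k / (5 * sqrt m)"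
proof -
  have step: "RM_rate r (m + j) - RM_rate r (m + Suc j) \<le> 3 / (5 * sqrt m)" for j
  proof -
    have "RM_rate r (m + j) - RM_rate r (Suc (m + j)) \<le> 3 / (5 * sqrt (m + j))"
      using assms by (intro RM_rate_diff_Suc_le) simp
    also have "\<dots> \<le> 3 / (5 * sqrt m)"
      using assms by (simp add: frac_le)
    finally show ?thesis
      by simp
  qed
  have "RM_rate r m - RM_rate r (m + k) = (\<Sum>j<k. RM_rate r (m + j) - RM_rate r (m + Suc j))"
    using sum_lessThan_telescope'[of "\<lambda>j. RM_rate r (m + j)" k] by simp
  also have "\<dots> \<le> k * (3 / (5 * sqrt m))"
    using sum_bounded_above[of "{..<k}", OF step] by simp
  finally show ?thesis
    by simp
qed

theorem lemma8:
  fixes r m k :: nat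
  assumes "r \<le> m" and "m \<ge> 1" and "k \<ge> 1"
  shows "RM_rate r m - RM_rate r (m + k) \<le> (3 * real k + 4) / (5 * sqrt (real m))"
proof -
  have "RM_rate r m - RM_rate r (m + k) \<le> 3 * real k / (5 * sqrt m)"
    using RM_rate_diff_le[OF \<open>m \<ge> 1\<close>] .
  also have "\<dots> \<le> (3 * real k + 4) / (5 * sqrt m)"
    by (simp add: divide_right_mono)
  finally show ?thesis .
qed

end
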